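(* Let $A>0$ and let $f:[0,A]\rightarrow\mathbb{R}$ be a continuous $3$-convex function. Then \[ f(x)+f(y)+f(z)+f(x+y+z)\geq f(x+y)+f(y+z)+f(z+x)+f(0) \] for all $x,y,z\in[0,A]$ with $x+y+z\leq A$. If in addition $f(0)\geq0$, then \[ f(x)+f(y)+f(z)+f(x+y+z)\geq f(x+y)+f(y+z)+f(z+x) \] for all such $x,y,z$.
   Context: A function $f$ defined on an interval $I$ is called $3$-convex if for all $x_0<x_1<x_2<x_3$ in $I$ the third-order divided difference $[x_0,x_1,x_2,x_3;f]=\sum_{j=0}^{3}\frac{f(x_j)}{\prod_{k\neq j}(x_j-x_k)}$ is nonnegative. *)

theory Defs
  imports "HOL-Analysis.Analysis"
begin

definition divdiff3 :: "(real \<Rightarrow> real) \<Rightarrow> real \<Rightarrow> real \<Rightarrow> real \<Rightarrow> real \<Rightarrow> real" where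
  "divdiff3 f x0 x1 x2 x3 =
     f x0 / ((x0 - x1) * (x0 - x2) * (x0 - x3))
   + f x1 / ((x1 - x0) * (x1 - x2) * (x1 - x3))
   + f x2 / ((x2 - x0) * (x2 - x1) * (x2 - x3))
   + f x3 / ((x3 - x0) * (x3 - x1) * (x3 - x2))"

definition convex3_on :: "real set \<Rightarrow> (real \<Rightarrow> real) \<Rightarrow> bool" where
  "convex3_on I f \<longleftrightarrow>
     (\<forall>x0 x1 x2 x3. x0 \<in> I \<and> x1 \<in> I \<and> x2 \<in> I \<and> x3 \<in> I \<and>
        x0 < x1 \<and> x1 < x2 \<and> x2 < x3 \<longrightarrow> divdiff3 f x0 x1 x2 x3 \<ge> 0)"

end

theory Submission
  imports Defs
begin

text \<open>
  The left-hand side minus the right-hand side is the mixed third difference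
  \<open>\<Delta>\<^sub>x \<Delta>\<^sub>y \<Delta>\<^sub>z f(0)\<close>.
  For a 3-convex \<open>f\<close> the second divided difference \<open>[a,b,c;f]\<close> is nondecreasing in each
  node, since replacing a node by a larger one changes it by a positive multiple of a third
  divided difference; in particular it grows under translation of all three nodes by \<open>z > 0\<close>.
  Hence \<open>g = \<Delta>\<^sub>z f\<close> has nonnegative second divided differences, i.e. is convex,
  and a convex \<open>g\<close> satisfies \<open>\<Delta>\<^sub>x \<Delta>\<^sub>y g(0) \<ge> 0\<close>.
\<close>

definition divdiff2 :: "(real \<Rightarrow> real) \<Rightarrow> real \<Rightarrow> real \<Rightarrow> real \<Rightarrow> real" where
  "divdiff2 f x0 x1 x2 =
     f x0 / ((x0 - x1) * (x0 - x2)) + f x1 / ((x1 - x0) * (x1 - x2)) + f x2 / ((x2 - x0) * (x2 - x1))"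

text \<open>In the following identities the nodes are written relative to \<open>x0\<close>, which turns them
  into polynomial identities in the node differences after clearing denominators.\<close>

lemma divdiff2_replace_last:
  assumes "distinct [x0, x1, x2, x3]"
  shows "divdiff2 f x0 x1 x3 - divdiff2 f x0 x1 x2 = (x3 - x2) * divdiff3 f x0 x1 x2 x3"
proof -
  have "divdiff2 f x0 (x0 + p) (x0 + r) - divdiff2 f x0 (x0 + p) (x0 + q)
      = (r - q) * divdiff3 f x0 (x0 + p) (x0 + q) (x0 + r)"
    if "p \<noteq> 0" "q \<noteq> 0" "r \<noteq> 0" "p \<noteq> q" "p \<noteq> r" "q \<noteq> r" for p q r
    using that unfolding divdiff2_def divdiff3_def by (simp add: divide_simps) algebra
  from this[of "x1 - x0" "x2 - x0" "x3 - x0"] assms show ?thesis by simp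
qed

lemma divdiff2_replace_mid:
  assumes "distinct [x0, x1, x2, x3]"
  shows "divdiff2 f x0 x2 x3 - divdiff2 f x0 x1 x3 = (x2 - x1) * divdiff3 f x0 x1 x2 x3"
proof -
  have "divdiff2 f x0 (x0 + q) (x0 + r) - divdiff2 f x0 (x0 + p) (x0 + r)
      = (q - p) * divdiff3 f x0 (x0 + p) (x0 + q) (x0 + r)"
    if "p \<noteq> 0" "q \<noteq> 0" "r \<noteq> 0" "p \<noteq> q" "p \<noteq> r" "q \<noteq> r" for p q r
    using that unfolding divdiff2_def divdiff3_def by (simp add: divide_simps) algebra
  from this[of "x1 - x0" "x2 - x0" "x3 - x0"] assms show ?thesis by simp
qed

lemma divdiff2_replace_first:
  assumes "distinct [x0, x1, x2, x3]"
  shows "divdiff2 f x1 x2 x3 - divdiff2 f x0 x2 x3 = (x1 - x0) * divdiff3 f x0 x1 x2 x3"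
proof -
  have "divdiff2 f (x0 + p) (x0 + q) (x0 + r) - divdiff2 f x0 (x0 + q) (x0 + r)
      = p * divdiff3 f x0 (x0 + p) (x0 + q) (x0 + r)"
    if "p \<noteq> 0" "q \<noteq> 0" "r \<noteq> 0" "p \<noteq> q" "p \<noteq> r" "q \<noteq> r" for p q r
    using that unfolding divdiff2_def divdiff3_def by (simp add: divide_simps) algebra
  from this[of "x1 - x0" "x2 - x0" "x3 - x0"] assms show ?thesis by simp
qed

lemma divdiff2_diff_shift:
  "divdiff2 (\<lambda>s. f (s + z) - f s) a b c = divdiff2 f (a + z) (b + z) (c + z) - divdiff2 f a b c"
  unfolding divdiff2_def by (simp add: diff_divide_distrib)

lemma convex3_on_divdiff2_le_shift:
  assumes "convex3_on I f" "{a..c + z} \<subseteq> I" "a < b" "b < c" "0 < z"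
  shows "divdiff2 f a b c \<le> divdiff2 f (a + z) (b + z) (c + z)"
proof -
  have nonneg: "0 \<le> divdiff3 f x0 x1 x2 x3"
    if "a \<le> x0" "x0 < x1" "x1 < x2" "x2 < x3" "x3 \<le> c + z" for x0 x1 x2 x3
    using assms(1,2) that unfolding convex3_on_def by (auto simp: subset_iff)
  have step: "d \<le> d'" if "d' - d = s * t" "0 < s" "0 \<le> t" for d d' s t :: real
    using that by (smt (verit) mult_nonneg_nonneg)
  have "divdiff2 f a b c \<le> divdiff2 f a b (c + z)"
    by (rule step[OF divdiff2_replace_last]) (use assms(3-) in \<open>auto intro!: nonneg\<close>)
  also have "\<dots> \<le> divdiff2 f a (b + z) (c + z)"
    by (rule step[OF divdiff2_replace_mid]) (use assms(3-) in \<open>auto intro!: nonneg\<close>)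
  also have "\<dots> \<le> divdiff2 f (a + z) (b + z) (c + z)"
    by (rule step[OF divdiff2_replace_first]) (use assms(3-) in \<open>auto intro!: nonneg\<close>)
  finally show ?thesis .
qed

lemma mixed_difference2_eq_divdiff2:
  assumes "x \<noteq> 0" "y \<noteq> 0" "x + y \<noteq> 0"
  shows "g (a + x + y) - g (a + x) - g (a + y) + g a
       = x * y * (divdiff2 g a (a + x) (a + x + y) + divdiff2 g a (a + y) (a + x + y))"
  using assms unfolding divdiff2_def by (simp add: divide_simps) algebra

lemma mixed_difference2_nonneg:
  assumes divdiff2_nonneg:
      "\<And>u v w. a \<le> u \<Longrightarrow> u < v \<Longrightarrow> v < w \<Longrightarrow> w \<le> a + x + y \<Longrightarrow> 0 \<le> divdiff2 g u v w"
    and "0 \<le> x" "0 \<le> y"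
  shows "g (a + x) + g (a + y) \<le> g a + g (a + x + y)"
proof (cases "x = 0 \<or> y = 0")
  case True
  then show ?thesis by auto
next
  case False
  with assms(2,3) have "0 < x" "0 < y" by auto
  then have "0 \<le> x * y * (divdiff2 g a (a + x) (a + x + y) + divdiff2 g a (a + y) (a + x + y))"
    using divdiff2_nonneg[of a "a + x" "a + x + y"] divdiff2_nonneg[of a "a + y" "a + x + y"]
    by simp
  with mixed_difference2_eq_divdiff2[of x y g a] \<open>0 < x\<close> \<open>0 < y\<close> show ?thesis by simp
qed

lemma convex3_on_mixed_difference3_nonneg:
  assumes "convex3_on I f" "{a..a + x + y + z} \<subseteq> I" "0 \<le> x" "0 \<le> y" "0 \<le> z"
  shows "f (a + x + y) + f (a + y + z) + f (a + z + x) + f a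
       \<le> f (a + x) + f (a + y) + f (a + z) + f (a + x + y + z)"
proof (cases "z = 0")
  case True
  then show ?thesis by (simp add: ac_simps)
next
  case False
  with assms(5) have "0 < z" by simp
  define g where "g s = f (s + z) - f s" for s
  have "0 \<le> divdiff2 g u v w" if "a \<le> u" "u < v" "v < w" "w \<le> a + x + y" for u v w
  proof -
    have "{u..w + z} \<subseteq> I" using assms(2) that by auto
    then show ?thesis
      using convex3_on_divdiff2_le_shift[OF assms(1) _ \<open>u < v\<close> \<open>v < w\<close> \<open>0 < z\<close>]
      unfolding g_def divdiff2_diff_shift by simp
  qed
  then have "g (a + x) + g (a + y) \<le> g a + g (a + x + y)"
    using mixed_difference2_nonneg assms(3,4) by blast
  then show ?thesis unfolding g_def by (simp add: ac_simps)
qed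

theorem proposition1:
  fixes A :: real and f :: "real \<Rightarrow> real"
  assumes "A > 0"
    and "continuous_on {0..A} f"
    and "convex3_on {0..A} f"
  shows "(\<forall>x y z. x \<in> {0..A} \<and> y \<in> {0..A} \<and> z \<in> {0..A} \<and> x + y + z \<le> A \<longrightarrow>
            f x + f y + f z + f (x + y + z) \<ge> f (x + y) + f (y + z) + f (z + x) + f 0)
       \<and> (f 0 \<ge> 0 \<longrightarrow>
          (\<forall>x y z. x \<in> {0..A} \<and> y \<in> {0..A} \<and> z \<in> {0..A} \<and> x + y + z \<le> A \<longrightarrow>
            f x + f y + f z + f (x + y + z) \<ge> f (x + y) + f (y + z) + f (z + x)))"
proof -
  have ineq: "f x + f y + f z + f (x + y + z) \<ge> f (x + y) + f (y + z) + f (z + x) + f 0"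
    if "x \<in> {0..A}" "y \<in> {0..A}" "z \<in> {0..A}" "x + y + z \<le> A" for x y z
    using convex3_on_mixed_difference3_nonneg[OF assms(3), of 0 x y z] that by simp
  then show ?thesis by (smt (verit))
qed

end
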